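(* Let $m\in[0,1]$ and $\varepsilon\ge0$. For all $z_1,z_2\in\mathbb{C}$ (with $z_1z_2\neq0$ if $m=\varepsilon=0$), setting $Z=\big((|z_1|^2+\varepsilon)^{\frac{m-1}{2}}z_1-(|z_2|^2+\varepsilon)^{\frac{m-1}{2}}z_2\big)\overline{(z_1-z_2)}$, we have $$2\sqrt m\,|\Im Z|\le(1-m)\Re Z.$$
   Context: When $m=1$ the factor $(|z|^2+\varepsilon)^0$ equals $1$. For $m<1$, $\varepsilon=0$ and $z=0$ the expression $(|z|^2)^{\frac{m-1}{2}}z$ is interpreted as $0$ (when $m>0$). *)

theory Defs
  imports Complex_Main
begin

text \<open>The map z \<mapsto> (|z|^2+eps)^((m-1)/2) z, with the conventions:
  for m = 1 the factor is 1; if |z|^2+eps = 0 (i.e. eps = 0, z = 0) the value is 0.\<close>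
definition pmap :: "real \<Rightarrow> real \<Rightarrow> complex \<Rightarrow> complex" where
  "pmap m eps z =
     (if m = 1 then z
      else if (cmod z)^2 + eps = 0 then 0
      else complex_of_real (((cmod z)^2 + eps) powr ((m - 1) / 2)) * z)"

end

theory Submission
  imports Defs "HOL-Analysis.Analysis"
begin

text \<open>Write \<open>r\<^sub>i = |z\<^sub>i|\<close>, \<open>a\<^sub>i = (r\<^sub>i\<^sup>2 + \<epsilon>)\<^bsup>(m-1)/2\<^esup>\<close> and \<open>z\<^sub>1 cnj z\<^sub>2 = p + i q\<close>.
  Then \<open>Im Z = (a\<^sub>2 - a\<^sub>1) q\<close> and \<open>Re Z = X + Y\<close> with \<open>X = (a\<^sub>1 r\<^sub>1 - a\<^sub>2 r\<^sub>2)(r\<^sub>1 - r\<^sub>2) \<ge> 0\<close> and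
  \<open>Y = (a\<^sub>1 + a\<^sub>2)(r\<^sub>1 r\<^sub>2 - p) \<ge> 0\<close>. Since \<open>q\<^sup>2 \<le> 2 r\<^sub>1 r\<^sub>2 (r\<^sub>1 r\<^sub>2 - p)\<close> and \<open>4XY \<le> (X + Y)\<^sup>2\<close>, the claim
  reduces to the one-dimensional inequality
  \<open>2 m (a\<^sub>2 - a\<^sub>1)\<^sup>2 r\<^sub>1 r\<^sub>2 \<le> (1 - m)\<^sup>2 (a\<^sub>1 + a\<^sub>2)(a\<^sub>1 r\<^sub>1 - a\<^sub>2 r\<^sub>2)(r\<^sub>1 - r\<^sub>2)\<close>.
  For \<open>r\<^sub>2 \<le> r\<^sub>1\<close> put \<open>a\<^sub>2/a\<^sub>1 = e\<^bsup>2d\<^esup>\<close> and \<open>r\<^sub>1/r\<^sub>2 = e\<^bsup>2s\<^esup>\<close>; then \<open>0 \<le> d \<le> (1 - m) s\<close>, and the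
  one-dimensional inequality becomes \<open>m sinh\<^sup>2 d \<le> (1 - m)\<^sup>2 cosh d sinh (s - d) sinh s\<close>, which
  follows from \<open>sinh d \<le> d cosh d\<close>, the convexity of \<open>sinh\<close> on \<open>[0, \<infinity>)\<close> and \<open>x \<le> sinh x\<close>.\<close>

lemma sinh_mult_le_mult_sinh:
  fixes k s :: real
  assumes "0 \<le> s" and "0 \<le> k" and "k \<le> 1"
  shows "sinh (k * s) \<le> k * sinh s"
proof -
  have "convex_on {0..} (sinh :: real \<Rightarrow> real)"
  proof (rule convex_on_realI[where f' = cosh])
    show "\<And>x. x \<in> {0..} \<Longrightarrow> (sinh has_real_derivative cosh x) (at x)"
      by (auto intro!: derivative_eq_intros)
    show "\<And>x y. x \<in> {0::real..} \<Longrightarrow> y \<in> {0..} \<Longrightarrow> x \<le> y \<Longrightarrow> cosh x \<le> cosh y"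
      by (simp add: cosh_real_nonneg_le_iff)
  qed simp
  from convex_onD[OF this, of k 0 s] assms show ?thesis by simp
qed

lemma sinh_le_mult_cosh:
  fixes d :: real
  assumes "0 \<le> d"
  shows "sinh d \<le> d * cosh d"
proof -
  have "(\<lambda>x. x * cosh x - sinh x) 0 \<le> (\<lambda>x. x * cosh x - sinh x) d"
  proof (rule DERIV_nonneg_imp_nondecreasing[OF assms])
    fix x :: real assume "0 \<le> x"
    then show "\<exists>y. ((\<lambda>x. x * cosh x - sinh x) has_real_derivative y) (at x) \<and> 0 \<le> y"
      by (intro exI[of _ "x * sinh x"]) (auto intro!: derivative_eq_intros)
  qed
  then show ?thesis by simp
qed

lemma le_sinh_real: "0 \<le> x \<Longrightarrow> x \<le> sinh (x :: real)"
  using real_le_x_sinh[of x] by (simp add: sinh_field_def exp_minus)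

lemma sinh_square_le:
  fixes k s d :: real
  assumes k: "0 \<le> k" "k \<le> 1" and s: "0 \<le> s" and d: "0 \<le> d" "d \<le> k * s"
  shows "(1 - k) * sinh d ^ 2 \<le> k\<^sup>2 * cosh d * sinh (s - d) * sinh s"
proof -
  have sinh_d_nonneg: "0 \<le> sinh d" using d by simp
  have "sinh d \<le> sinh (k * s)" using d by simp
  with sinh_mult_le_mult_sinh[OF s k] have sinh_d_le: "sinh d \<le> k * sinh s" by linarith
  have ds: "d \<le> s" using mult_left_le_one_le[OF s k] d by linarith
  have "(1 - k) * s \<le> sinh ((1 - k) * s)" using k s by (intro le_sinh_real) simp
  also have "\<dots> \<le> sinh (s - d)" using d by (simp add: algebra_simps)
  finally have sinh_sd: "(1 - k) * s \<le> sinh (s - d)" .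
  have "(1 - k) * sinh d ^ 2 \<le> (1 - k) * (d * cosh d * sinh d)"
    using mult_right_mono[OF sinh_le_mult_cosh[OF d(1)] sinh_d_nonneg] k
    by (simp add: power2_eq_square mult_left_mono)
  also have "\<dots> \<le> (1 - k) * (k * s * cosh d * sinh d)"
    using d sinh_d_nonneg k by (intro mult_right_mono mult_left_mono) auto
  also have "\<dots> = k * cosh d * (((1 - k) * s) * sinh d)" by simp
  also have "\<dots> \<le> k * cosh d * (sinh (s - d) * (k * sinh s))"
    using sinh_sd sinh_d_nonneg sinh_d_le k s ds by (intro mult_left_mono mult_mono) auto
  also have "\<dots> = k\<^sup>2 * cosh d * sinh (s - d) * sinh s" by (simp add: power2_eq_square)
  finally show ?thesis .
qed

lemma ratio_inequality:
  fixes k A P :: real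
  assumes k: "0 \<le> k" "k \<le> 1" and A: "1 \<le> A" "A \<le> P powr k" and P: "1 \<le> P"
  shows "2 * (1 - k) * (A - 1)\<^sup>2 * P \<le> k\<^sup>2 * (1 + A) * (P - A) * (P - 1)"
proof -
  define x where "x = sqrt A"
  define y where "y = sqrt P"
  have x: "0 < x" "x\<^sup>2 = A" and y: "0 < y" "y\<^sup>2 = P"
    using A P by (auto simp: x_def y_def)
  have "ln A \<le> k * ln P" using A P by (metis ln_powr ln_mono less_le_trans zero_less_one)
  then have "ln x \<le> k * ln y" using A P by (simp add: x_def y_def ln_sqrt)
  moreover have "0 \<le> ln x" "0 \<le> ln y" using A P by (simp_all add: x_def y_def ln_sqrt)
  ultimately have "(1 - k) * sinh (ln x) ^ 2 \<le> k\<^sup>2 * cosh (ln x) * sinh (ln (y / x)) * sinh (ln y)"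
    using sinh_square_le[OF k] x y by (simp add: ln_div)
  then have "(1 - k) * ((x - 1/x) / 2)\<^sup>2 \<le> k\<^sup>2 * ((x + 1/x) / 2) * ((y/x - x/y) / 2) * ((y - 1/y) / 2)"
    using x y by (simp add: sinh_ln_real cosh_ln_real inverse_eq_divide)
  then have scaled: "8 * x\<^sup>2 * y\<^sup>2 * ((1 - k) * ((x - 1/x) / 2)\<^sup>2)
      \<le> 8 * x\<^sup>2 * y\<^sup>2 * (k\<^sup>2 * ((x + 1/x) / 2) * ((y/x - x/y) / 2) * ((y - 1/y) / 2))"
    by (intro mult_left_mono) auto
  have lhs: "8 * x\<^sup>2 * y\<^sup>2 * ((1 - k) * ((x - 1/x) / 2)\<^sup>2) = 2 * (1 - k) * (A - 1)\<^sup>2 * P"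
    using x y by (simp add: field_simps power2_eq_square flip: x(2) y(2))
  have rhs: "8 * x\<^sup>2 * y\<^sup>2 * (k\<^sup>2 * ((x + 1/x) / 2) * ((y/x - x/y) / 2) * ((y - 1/y) / 2))
      = k\<^sup>2 * (1 + A) * (P - A) * (P - 1)"
    using x y by (simp add: field_simps power2_eq_square flip: x(2) y(2))
  show ?thesis using scaled unfolding lhs rhs .
qed

definition radial_weight :: "real \<Rightarrow> real \<Rightarrow> real \<Rightarrow> real" where
  "radial_weight m eps r = (r\<^sup>2 + eps) powr ((m - 1) / 2)"

lemma radial_weight_nonneg: "0 \<le> radial_weight m eps r"
  by (simp add: radial_weight_def)

lemma radial_weight_ratio_bounds:
  fixes m eps r1 r2 :: real
  assumes m: "m \<le> 1" and eps: "0 \<le> eps" and r: "0 < r2" "r2 \<le> r1"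
  defines "A \<equiv> radial_weight m eps r2 / radial_weight m eps r1"
  shows "1 \<le> A" and "A \<le> (r1 / r2) powr (1 - m)"
proof -
  define u1 where "u1 = r1\<^sup>2 + eps"
  define u2 where "u2 = r2\<^sup>2 + eps"
  have u: "0 < u2" "u2 \<le> u1" using r eps by (auto simp: u1_def u2_def add_pos_nonneg power_mono)
  define e where "e = (1 - m) / 2"
  have "(m - 1) / 2 = - e" by (simp add: e_def field_simps)
  then have "A = u2 powr (- e) / u1 powr (- e)"
    by (simp add: A_def radial_weight_def u1_def u2_def)
  then have A_eq: "A = (u1 / u2) powr e"
    using u by (simp add: powr_minus_divide powr_divide)
  have e: "0 \<le> e" "2 * e = 1 - m" using m by (simp_all add: e_def field_simps)
  show "1 \<le> A" unfolding A_eq using u e by (intro ge_one_powr_ge_zero) auto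
  have "u1 * r2\<^sup>2 \<le> u2 * r1\<^sup>2"
    using r eps by (simp add: u1_def u2_def algebra_simps power_mono mult_left_mono)
  then have "u1 / u2 \<le> (r1 / r2)\<^sup>2"
    using u r by (simp add: field_simps power_divide)
  then have "A \<le> ((r1 / r2)\<^sup>2) powr e"
    unfolding A_eq using u e by (intro powr_mono2) auto
  also have "\<dots> = ((r1 / r2) powr 2) powr e"
    using r by simp
  also have "\<dots> = (r1 / r2) powr (1 - m)"
    unfolding powr_powr e(2) ..
  finally show "A \<le> (r1 / r2) powr (1 - m)" .
qed

lemma radial_inequality_ordered:
  fixes m eps r1 r2 :: real
  assumes m: "0 \<le> m" "m \<le> 1" and eps: "0 \<le> eps" and r: "0 \<le> r2" "r2 \<le> r1"
  defines "a1 \<equiv> radial_weight m eps r1" and "a2 \<equiv> radial_weight m eps r2"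
  shows "0 \<le> (a1 * r1 - a2 * r2) * (r1 - r2)"
    and "2 * m * (a2 - a1)\<^sup>2 * r1 * r2 \<le> (1 - m)\<^sup>2 * (a1 + a2) * (a1 * r1 - a2 * r2) * (r1 - r2)"
proof -
  have a: "0 \<le> a1" "0 \<le> a2" by (simp_all add: a1_def a2_def radial_weight_nonneg)
  have "0 \<le> (a1 * r1 - a2 * r2) * (r1 - r2) \<and>
        2 * m * (a2 - a1)\<^sup>2 * r1 * r2 \<le> (1 - m)\<^sup>2 * (a1 + a2) * (a1 * r1 - a2 * r2) * (r1 - r2)"
  proof (cases "r2 = 0")
    case True
    then show ?thesis using a r by simp
  next
    case False
    with r have r2: "0 < r2" by simp
    have "0 < r1\<^sup>2 + eps" using r2 r eps by (simp add: add_pos_nonneg)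
    then have a1: "0 < a1" by (simp add: a1_def radial_weight_def)
    define A where "A = a2 / a1"
    define P where "P = r1 / r2"
    have A: "1 \<le> A" "A \<le> P powr (1 - m)"
      using radial_weight_ratio_bounds[OF m(2) eps r2 r(2)] by (simp_all add: A_def P_def a1_def a2_def)
    have P: "1 \<le> P" using r r2 by (simp add: P_def)
    have "P powr (1 - m) \<le> P" using powr_mono[of "1 - m" 1 P] P m by simp
    with A have "A \<le> P" by linarith
    have a2_eq: "a2 = a1 * A" and r1_eq: "r1 = r2 * P" using a1 r2 by (simp_all add: A_def P_def)
    have "2 * m * (A - 1)\<^sup>2 * P \<le> (1 - m)\<^sup>2 * (1 + A) * (P - A) * (P - 1)"
      using ratio_inequality[of "1 - m" A P] m A P by simp
    then have "a1\<^sup>2 * r2\<^sup>2 * (2 * m * (A - 1)\<^sup>2 * P)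
        \<le> a1\<^sup>2 * r2\<^sup>2 * ((1 - m)\<^sup>2 * (1 + A) * (P - A) * (P - 1))"
      by (intro mult_left_mono) auto
    moreover have "a1\<^sup>2 * r2\<^sup>2 * (2 * m * (A - 1)\<^sup>2 * P) = 2 * m * (a2 - a1)\<^sup>2 * r1 * r2"
      unfolding a2_eq r1_eq by (simp add: power2_eq_square algebra_simps)
    moreover have "a1\<^sup>2 * r2\<^sup>2 * ((1 - m)\<^sup>2 * (1 + A) * (P - A) * (P - 1))
        = (1 - m)\<^sup>2 * (a1 + a2) * (a1 * r1 - a2 * r2) * (r1 - r2)"
      unfolding a2_eq r1_eq by (simp add: power2_eq_square algebra_simps)
    moreover have "(a1 * r1 - a2 * r2) * (r1 - r2) = a1 * r2 * (P - A) * (r2 * (P - 1))"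
      unfolding a2_eq r1_eq by (simp add: algebra_simps)
    moreover have "0 \<le> a1 * r2 * (P - A) * (r2 * (P - 1))"
      using a1 r2 \<open>A \<le> P\<close> P by simp
    ultimately show ?thesis by simp
  qed
  then show "0 \<le> (a1 * r1 - a2 * r2) * (r1 - r2)"
    and "2 * m * (a2 - a1)\<^sup>2 * r1 * r2 \<le> (1 - m)\<^sup>2 * (a1 + a2) * (a1 * r1 - a2 * r2) * (r1 - r2)"
    by auto
qed

lemma radial_inequality:
  fixes m eps r1 r2 :: real
  assumes m: "0 \<le> m" "m \<le> 1" and eps: "0 \<le> eps" and r: "0 \<le> r1" "0 \<le> r2"
  defines "a1 \<equiv> radial_weight m eps r1" and "a2 \<equiv> radial_weight m eps r2"
  shows "0 \<le> (a1 * r1 - a2 * r2) * (r1 - r2)"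
    and "2 * m * (a2 - a1)\<^sup>2 * r1 * r2 \<le> (1 - m)\<^sup>2 * (a1 + a2) * (a1 * r1 - a2 * r2) * (r1 - r2)"
proof -
  have "0 \<le> (a1 * r1 - a2 * r2) * (r1 - r2) \<and>
        2 * m * (a2 - a1)\<^sup>2 * r1 * r2 \<le> (1 - m)\<^sup>2 * (a1 + a2) * (a1 * r1 - a2 * r2) * (r1 - r2)"
  proof (cases "r2 \<le> r1")
    case True
    then show ?thesis using radial_inequality_ordered[OF m eps r(2) True] by (simp add: a1_def a2_def)
  next
    case False
    then have "r1 \<le> r2" by simp
    from radial_inequality_ordered[OF m eps r(1) this] show ?thesis
      unfolding a1_def a2_def by (simp add: algebra_simps power2_commute)
  qed
  then show "0 \<le> (a1 * r1 - a2 * r2) * (r1 - r2)"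
    and "2 * m * (a2 - a1)\<^sup>2 * r1 * r2 \<le> (1 - m)\<^sup>2 * (a1 + a2) * (a1 * r1 - a2 * r2) * (r1 - r2)"
    by auto
qed

lemma cross_term_inequality:
  fixes a1 a2 r1 r2 p q m :: real
  assumes a: "0 \<le> a1" "0 \<le> a2" and r: "0 \<le> r1" "0 \<le> r2" and m: "0 \<le> m" "m \<le> 1"
    and pq: "p\<^sup>2 + q\<^sup>2 = r1\<^sup>2 * r2\<^sup>2"
    and X_nonneg: "0 \<le> (a1 * r1 - a2 * r2) * (r1 - r2)"
    and radial: "2 * m * (a2 - a1)\<^sup>2 * r1 * r2 \<le> (1 - m)\<^sup>2 * (a1 + a2) * (a1 * r1 - a2 * r2) * (r1 - r2)"
  shows "2 * sqrt m * \<bar>(a2 - a1) * q\<bar> \<le> (1 - m) * (a1 * r1\<^sup>2 + a2 * r2\<^sup>2 - (a1 + a2) * p)"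
proof -
  define X where "X = (a1 * r1 - a2 * r2) * (r1 - r2)"
  define R where "R = r1 * r2"
  define Y where "Y = (a1 + a2) * (R - p)"
  have R: "0 \<le> R" using r by (simp add: R_def)
  have "p\<^sup>2 \<le> R\<^sup>2" using pq by (simp add: R_def power_mult_distrib) (metis le_add_same_cancel1 zero_le_power2)
  then have pR: "p \<le> R" using R power2_le_imp_le by blast
  have Y: "0 \<le> Y" using a pR by (simp add: Y_def)
  have "q\<^sup>2 = (R - p) * (R + p)" using pq by (simp add: R_def power2_eq_square algebra_simps)
  also have "\<dots> \<le> (R - p) * (2 * R)" using pR by (intro mult_left_mono) auto
  finally have q2: "q\<^sup>2 \<le> 2 * R * (R - p)" by (simp add: algebra_simps)
  have "(2 * sqrt m * \<bar>(a2 - a1) * q\<bar>)\<^sup>2 = 4 * m * (a2 - a1)\<^sup>2 * q\<^sup>2"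
    using m by (simp add: power_mult_distrib power2_abs)
  also have "\<dots> \<le> 4 * m * (a2 - a1)\<^sup>2 * (2 * R * (R - p))"
    using q2 m by (intro mult_left_mono) auto
  also have "\<dots> = 4 * (R - p) * (2 * m * (a2 - a1)\<^sup>2 * r1 * r2)" by (simp add: R_def algebra_simps)
  also have "\<dots> \<le> 4 * (R - p) * ((1 - m)\<^sup>2 * (a1 + a2) * X)"
    using radial pR unfolding X_def by (intro mult_left_mono) (auto simp: algebra_simps)
  also have "\<dots> = (1 - m)\<^sup>2 * (4 * X * Y)" by (simp add: Y_def algebra_simps)
  also have "\<dots> \<le> (1 - m)\<^sup>2 * (X + Y)\<^sup>2"
  proof (intro mult_left_mono)
    have "(X + Y)\<^sup>2 - 4 * X * Y = (X - Y)\<^sup>2" by (simp add: power2_eq_square algebra_simps)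
    then show "4 * X * Y \<le> (X + Y)\<^sup>2" by (metis diff_ge_0_iff_ge zero_le_power2)
  qed simp
  also have "\<dots> = ((1 - m) * (X + Y))\<^sup>2" by (simp add: power_mult_distrib)
  finally have "(2 * sqrt m * \<bar>(a2 - a1) * q\<bar>)\<^sup>2 \<le> ((1 - m) * (X + Y))\<^sup>2" .
  moreover have "0 \<le> (1 - m) * (X + Y)" using m X_nonneg Y by (simp add: X_def)
  ultimately have "2 * sqrt m * \<bar>(a2 - a1) * q\<bar> \<le> (1 - m) * (X + Y)" using power2_le_imp_le by blast
  moreover have "X + Y = a1 * r1\<^sup>2 + a2 * r2\<^sup>2 - (a1 + a2) * p"
    by (simp add: X_def Y_def R_def power2_eq_square algebra_simps)
  ultimately show ?thesis by simp
qed

lemma sector_inequality: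
  fixes a1 a2 m :: real and z1 z2 :: complex
  assumes a: "0 \<le> a1" "0 \<le> a2" and m: "0 \<le> m" "m \<le> 1"
    and X_nonneg: "0 \<le> (a1 * cmod z1 - a2 * cmod z2) * (cmod z1 - cmod z2)"
    and radial: "2 * m * (a2 - a1)\<^sup>2 * cmod z1 * cmod z2
      \<le> (1 - m)\<^sup>2 * (a1 + a2) * (a1 * cmod z1 - a2 * cmod z2) * (cmod z1 - cmod z2)"
  defines "Z \<equiv> (complex_of_real a1 * z1 - complex_of_real a2 * z2) * cnj (z1 - z2)"
  shows "2 * sqrt m * \<bar>Im Z\<bar> \<le> (1 - m) * Re Z"
proof -
  define p where "p = Re z1 * Re z2 + Im z1 * Im z2"
  define q where "q = Im z1 * Re z2 - Re z1 * Im z2"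
  have r1: "(cmod z1)\<^sup>2 = (Re z1)\<^sup>2 + (Im z1)\<^sup>2" and r2: "(cmod z2)\<^sup>2 = (Re z2)\<^sup>2 + (Im z2)\<^sup>2"
    by (simp_all add: cmod_power2)
  have pq: "p\<^sup>2 + q\<^sup>2 = (cmod z1)\<^sup>2 * (cmod z2)\<^sup>2"
    unfolding r1 r2 p_def q_def by (simp add: power2_eq_square algebra_simps)
  have "Im Z = (a2 - a1) * q"
    by (simp add: Z_def q_def algebra_simps)
  moreover have "Re Z = a1 * (cmod z1)\<^sup>2 + a2 * (cmod z2)\<^sup>2 - (a1 + a2) * p"
    unfolding Z_def p_def r1 r2 by (simp add: power2_eq_square algebra_simps)
  ultimately show ?thesis
    using cross_term_inequality[OF a norm_ge_zero norm_ge_zero m pq X_nonneg radial] by simp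
qed

lemma pmap_eq_radial_weight: "m \<noteq> 1 \<Longrightarrow> pmap m eps z = complex_of_real (radial_weight m eps (cmod z)) * z"
  by (simp add: pmap_def radial_weight_def)

theorem lemma5p7:
  fixes m eps :: real and z1 z2 :: complex
  assumes "0 \<le> m" and "m \<le> 1" and "0 \<le> eps"
    and "m = 0 \<and> eps = 0 \<longrightarrow> z1 * z2 \<noteq> 0"
  shows "2 * sqrt m * \<bar>Im ((pmap m eps z1 - pmap m eps z2) * cnj (z1 - z2))\<bar>
           \<le> (1 - m) * Re ((pmap m eps z1 - pmap m eps z2) * cnj (z1 - z2))"
proof (cases "m = 1")
  case True
  then show ?thesis by (simp add: pmap_def algebra_simps)
next
  case False
  note m = assms(1,2) and eps = assms(3)
  show ?thesis
    unfolding pmap_eq_radial_weight[OF False]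
    using sector_inequality[OF radial_weight_nonneg radial_weight_nonneg m
        radial_inequality[OF m eps norm_ge_zero norm_ge_zero]] .
qed

end
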